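(* Let $n\geq2$ be an integer, let $\varphi_n:\left(0,\frac{2\pi}{\log n}\right)\to\mathbb{T}\setminus\{1\}$ be $\varphi_n(t)=e^{it\log n}$, and let $A\subseteq\mathbb{T}$ be an $m$-measurable set with $m(A)=1$. Then $\{\kappa_{1+it}\}_{t\in\varphi_n^{-1}(A)}$ spans a dense subspace of $H^2$.
   Context: $\mathbb{T}$ is the unit circle and $m$ the normalized Lebesgue measure on $\mathbb{T}$. $H^2$ denotes the Hardy space of analytic functions $f(z)=\sum_{k\ge0}\hat f(k)z^k$ on the open unit disk with $\sum_{k}|\hat f(k)|^2<\infty$. For $s\in\mathbb{C}\setminus\{0\}$ set $\varphi_0(s)=-\frac1s$ and $\varphi_k(s)=-\frac1s\left((k+1)^{1-s}-k^{1-s}\right)$ for $k\geq1$. For $\Re s>1/2$ the zeta kernel is $\kappa_s(z)=\sum_{k=0}^\infty\varphi_k(\bar s)z^k\in H^2$; equivalently $\langle f,\kappa_s\rangle=\Lambda^{(s)}(f)$ where $\Lambda^{(s)}$ is the bounded linear functional on $H^2$ with $\Lambda^{(s)}(z^k)=\varphi_k(s)$. *)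

theory Defs
  imports "HOL-Analysis.Analysis"
begin

text \<open>H^2 is modelled isometrically by its Taylor coefficient sequences:
  f(z) = sum_k f k z^k with square-summable coefficients.\<close>

definition H2 :: "(nat \<Rightarrow> complex) set" where
  "H2 = {f. summable (\<lambda>k. (cmod (f k))\<^sup>2)}"

definition H2_norm :: "(nat \<Rightarrow> complex) \<Rightarrow> real" where
  "H2_norm f = sqrt (\<Sum>k. (cmod (f k))\<^sup>2)"

definition zeta_phi :: "complex \<Rightarrow> nat \<Rightarrow> complex" where
  "zeta_phi s k = (if k = 0 then - 1 / s
     else - (1 / s) * ((of_nat (k + 1)) powr (1 - s) - (of_nat k) powr (1 - s)))"

definition zeta_kernel :: "complex \<Rightarrow> nat \<Rightarrow> complex" where
  "zeta_kernel s k = zeta_phi (cnj s) k"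

definition kernels_span_dense :: "real set \<Rightarrow> bool" where
  "kernels_span_dense B \<longleftrightarrow>
     (\<forall>f\<in>H2. \<forall>e>0. \<exists>(N::nat) (ts::nat \<Rightarrow> real) (c::nat \<Rightarrow> complex).
        (\<forall>i<N. ts i \<in> B) \<and>
        H2_norm (\<lambda>k. f k - (\<Sum>i<N. c i * zeta_kernel (1 + \<i> * complex_of_real (ts i)) k)) < e)"

text \<open>Normalized Lebesgue measure on the circle, via the parametrization theta -> cis theta
  on [0, 2 pi).\<close>
definition circle_measurable :: "complex set \<Rightarrow> bool" where
  "circle_measurable A \<longleftrightarrow> {\<theta> \<in> {0..<2*pi}. cis \<theta> \<in> A} \<in> sets lebesgue"

definition circle_m :: "complex set \<Rightarrow> real" where
  "circle_m A = measure lebesgue {\<theta> \<in> {0..<2*pi}. cis \<theta> \<in> A} / (2*pi)"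

definition phi_n :: "nat \<Rightarrow> real \<Rightarrow> complex" where
  "phi_n n t = cis (t * ln (real n))"

end

(*
  Let B = phi_n^(-1)(A). If the kernels kappa_(1+it), t in B, did not span a dense subspace,
  the residual of the best approximation of some f by their span would be a nonzero g in H^2
  orthogonal to all of them. Up to the factor -s, <g, kappa_s> is the series
  G(s) = sum_k g_k ((k+1)^(1-s) - k^(1-s)), holomorphic on Re s > 1/2. Since m(A) = 1, B is
  dense in (0, 2 pi / log n), so the zeros 1 + it of G accumulate on the line Re s = 1 and G
  vanishes on the whole half-plane. At s = M + 1, summation by parts turns G into the Dirichlet
  series sum_j (g_j - g_(j+1)) (j+1)^(-M); as M -> infinity its first nonzero coefficient would
  dominate, so g is constant, and a constant square-summable sequence is 0.
*)
theory Submission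
  imports Defs "HOL-Complex_Analysis.Complex_Analysis"
begin

definition H2_normsq :: "(nat \<Rightarrow> complex) \<Rightarrow> real" where
  "H2_normsq f = (\<Sum>k. (cmod (f k))\<^sup>2)"

definition H2_inner :: "(nat \<Rightarrow> complex) \<Rightarrow> (nat \<Rightarrow> complex) \<Rightarrow> complex" where
  "H2_inner f g = (\<Sum>k. f k * cnj (g k))"

definition H2_subspace :: "(nat \<Rightarrow> complex) set \<Rightarrow> bool" where
  "H2_subspace V \<longleftrightarrow> V \<subseteq> H2 \<and> (\<lambda>k. 0) \<in> V \<and>
     (\<forall>v\<in>V. \<forall>w\<in>V. (\<lambda>k. v k + w k) \<in> V) \<and> (\<forall>c. \<forall>v\<in>V. (\<lambda>k. c * v k) \<in> V)"

lemma H2_subspace_subset: "H2_subspace V \<Longrightarrow> v \<in> V \<Longrightarrow> v \<in> H2"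
  by (auto simp: H2_subspace_def)

lemma H2_subspace_zero: "H2_subspace V \<Longrightarrow> (\<lambda>k. 0) \<in> V"
  by (simp add: H2_subspace_def)

lemma H2_subspace_add: "H2_subspace V \<Longrightarrow> v \<in> V \<Longrightarrow> w \<in> V \<Longrightarrow> (\<lambda>k. v k + w k) \<in> V"
  by (simp add: H2_subspace_def)

lemma H2_subspace_cmult: "H2_subspace V \<Longrightarrow> v \<in> V \<Longrightarrow> (\<lambda>k. c * v k) \<in> V"
  by (simp add: H2_subspace_def)

lemma H2_add:
  assumes "f \<in> H2" "g \<in> H2"
  shows "(\<lambda>k. f k + g k) \<in> H2"
proof -
  have "(cmod (a + b))\<^sup>2 \<le> 2 * (cmod a)\<^sup>2 + 2 * (cmod b)\<^sup>2" for a b :: complex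
  proof -
    have "(cmod (a + b))\<^sup>2 \<le> (cmod a + cmod b)\<^sup>2"
      by (simp add: norm_triangle_ineq power_mono)
    also have "\<dots> \<le> 2 * (cmod a)\<^sup>2 + 2 * (cmod b)\<^sup>2"
      using sum_squares_ge_zero[of "cmod a - cmod b" 0] by (simp add: power2_eq_square algebra_simps)
    finally show ?thesis .
  qed
  moreover have "summable (\<lambda>k. 2 * (cmod (f k))\<^sup>2 + 2 * (cmod (g k))\<^sup>2)"
    using assms by (auto simp: H2_def intro!: summable_add summable_mult)
  ultimately show ?thesis
    unfolding H2_def by (auto intro: summable_comparison_test')
qed

lemma H2_cmult: "f \<in> H2 \<Longrightarrow> (\<lambda>k. c * f k) \<in> H2"
  by (simp add: H2_def norm_mult power_mult_distrib summable_mult)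

lemma H2_diff: "f \<in> H2 \<Longrightarrow> g \<in> H2 \<Longrightarrow> (\<lambda>k. f k - g k) \<in> H2"
  using H2_add[of f "\<lambda>k. (-1) * g k"] H2_cmult[of g "-1"] by simp

lemma H2_sum: "finite I \<Longrightarrow> (\<And>i. i \<in> I \<Longrightarrow> F i \<in> H2) \<Longrightarrow> (\<lambda>k. \<Sum>i\<in>I. F i k) \<in> H2"
proof (induction I rule: finite_induct)
  case empty
  then show ?case by (simp add: H2_def)
next
  case (insert i I)
  then show ?case by (simp add: H2_add)
qed

lemma H2_normsq_nonneg: "f \<in> H2 \<Longrightarrow> H2_normsq f \<ge> 0"
  by (simp add: H2_def H2_normsq_def suminf_nonneg)

lemma H2_normsq_cmult: "f \<in> H2 \<Longrightarrow> H2_normsq (\<lambda>k. c * f k) = (cmod c)\<^sup>2 * H2_normsq f"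
  by (simp add: H2_def H2_normsq_def norm_mult power_mult_distrib suminf_mult)

lemma H2_norm_eq_sqrt_normsq: "H2_norm f = sqrt (H2_normsq f)"
  by (simp add: H2_norm_def H2_normsq_def)

lemma H2_norm_minus_commute: "H2_norm (\<lambda>k. f k - g k) = H2_norm (\<lambda>k. g k - f k)"
  by (simp add: H2_norm_def norm_minus_commute)

lemma norm_coeff_le_H2_norm: "f \<in> H2 \<Longrightarrow> cmod (f k) \<le> H2_norm f"
  using sum_le_suminf[of "\<lambda>k. (cmod (f k))\<^sup>2" "{k}"]
  by (simp add: H2_def H2_norm_def real_le_rsqrt)

lemma summable_H2_inner:
  assumes "f \<in> H2" "g \<in> H2"
  shows "summable (\<lambda>k. f k * cnj (g k))"
proof (rule summable_norm_cancel, rule summable_comparison_test')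
  show "summable (\<lambda>k. ((cmod (f k))\<^sup>2 + (cmod (g k))\<^sup>2) / 2)"
    using assms by (auto simp: H2_def intro!: summable_divide summable_add)
  show "norm (cmod (f k * cnj (g k))) \<le> ((cmod (f k))\<^sup>2 + (cmod (g k))\<^sup>2) / 2" for k
    using sum_squares_ge_zero[of "cmod (f k) - cmod (g k)" 0]
    by (simp add: norm_mult power2_eq_square algebra_simps)
qed

lemma H2_normsq_diff_cmult:
  assumes "f \<in> H2" "g \<in> H2"
  shows "H2_normsq (\<lambda>k. f k - c * g k) =
    H2_normsq f - 2 * Re (cnj c * H2_inner f g) + (cmod c)\<^sup>2 * H2_normsq g"
proof -
  have expand: "(cmod (a - c * b))\<^sup>2 = (cmod a)\<^sup>2 - 2 * Re (cnj c * (a * cnj b)) + (cmod c)\<^sup>2 * (cmod b)\<^sup>2"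
    for a b :: complex
    unfolding cmod_power2 by (simp add: algebra_simps power2_eq_square)
  have "(\<lambda>k. f k * cnj (g k)) sums H2_inner f g"
    unfolding H2_inner_def using summable_H2_inner[OF assms] by (simp add: summable_sums)
  then have cross: "(\<lambda>k. 2 * Re (cnj c * (f k * cnj (g k)))) sums (2 * Re (cnj c * H2_inner f g))"
    by (intro sums_mult sums_Re)
  have f: "(\<lambda>k. (cmod (f k))\<^sup>2) sums H2_normsq f" and g: "(\<lambda>k. (cmod (g k))\<^sup>2) sums H2_normsq g"
    using assms by (auto simp: H2_def H2_normsq_def summable_sums)
  have "(\<lambda>k. (cmod (f k - c * g k))\<^sup>2) sums
      (H2_normsq f - 2 * Re (cnj c * H2_inner f g) + (cmod c)\<^sup>2 * H2_normsq g)"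
    unfolding expand using sums_add[OF sums_diff[OF f cross] sums_mult[OF g]] .
  then show ?thesis
    unfolding H2_normsq_def by (rule sums_unique[symmetric])
qed

lemma H2_parallelogram:
  assumes "f \<in> H2" "g \<in> H2"
  shows "H2_normsq (\<lambda>k. f k - g k) + H2_normsq (\<lambda>k. f k + g k) = 2 * H2_normsq f + 2 * H2_normsq g"
proof -
  have pointwise: "(cmod (a - b))\<^sup>2 + (cmod (a + b))\<^sup>2 = 2 * (cmod a)\<^sup>2 + 2 * (cmod b)\<^sup>2" for a b :: complex
    unfolding cmod_power2 by (simp add: algebra_simps power2_eq_square)
  have "(\<lambda>k. (cmod (f k - g k))\<^sup>2 + (cmod (f k + g k))\<^sup>2) sums
      (H2_normsq (\<lambda>k. f k - g k) + H2_normsq (\<lambda>k. f k + g k))"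
    using H2_diff[OF assms] H2_add[OF assms]
    unfolding H2_normsq_def H2_def by (intro sums_add summable_sums) auto
  moreover have "(\<lambda>k. 2 * (cmod (f k))\<^sup>2 + 2 * (cmod (g k))\<^sup>2) sums (2 * H2_normsq f + 2 * H2_normsq g)"
    using assms unfolding H2_normsq_def H2_def by (intro sums_add sums_mult summable_sums) auto
  ultimately show ?thesis
    unfolding pointwise by (rule sums_unique2)
qed

lemma H2_norm_triangle:
  assumes "f \<in> H2" "g \<in> H2"
  shows "H2_norm (\<lambda>k. f k + g k) \<le> H2_norm f + H2_norm g"
proof -
  have partial: "L2_set (cmod \<circ> h) {..<K} \<le> sqrt (H2_normsq h)" if "h \<in> H2" for h K
    using that unfolding L2_set_def H2_def H2_normsq_def by (auto intro!: sum_le_suminf)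
  have "H2_normsq (\<lambda>k. f k + g k) \<le> (sqrt (H2_normsq f) + sqrt (H2_normsq g))\<^sup>2"
    unfolding H2_normsq_def[of "\<lambda>k. f k + g k"]
  proof (rule suminf_le_const)
    show "summable (\<lambda>k. (cmod (f k + g k))\<^sup>2)"
      using H2_add[OF assms] by (simp add: H2_def)
    fix K
    have "L2_set (\<lambda>k. cmod (f k + g k)) {..<K} \<le> L2_set (\<lambda>k. cmod (f k) + cmod (g k)) {..<K}"
      by (rule L2_set_mono) (auto simp: norm_triangle_ineq)
    also have "\<dots> \<le> L2_set (cmod \<circ> f) {..<K} + L2_set (cmod \<circ> g) {..<K}"
      using L2_set_triangle_ineq[of "cmod \<circ> f" "cmod \<circ> g"] by (simp add: o_def)
    also have "\<dots> \<le> sqrt (H2_normsq f) + sqrt (H2_normsq g)"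
      using partial assms by (intro add_mono)
    finally show "(\<Sum>k<K. (cmod (f k + g k))\<^sup>2) \<le> (sqrt (H2_normsq f) + sqrt (H2_normsq g))\<^sup>2"
      by (simp add: L2_set_def real_sqrt_le_iff sqrt_le_D)
  qed
  then show ?thesis
    by (simp add: H2_norm_eq_sqrt_normsq real_le_lsqrt H2_normsq_nonneg assms)
qed

lemma tendsto_H2_norm:
  assumes h: "\<And>m. h m \<in> H2" and g: "g \<in> H2"
    and conv: "(\<lambda>m. H2_norm (\<lambda>k. h m k - g k)) \<longlonglongrightarrow> 0"
  shows "(\<lambda>m. H2_norm (h m)) \<longlonglongrightarrow> H2_norm g"
proof (rule LIM_zero_cancel, rule Lim_null_comparison[OF always_eventually conv], intro allI)
  fix m
  have "H2_norm (h m) \<le> H2_norm g + H2_norm (\<lambda>k. h m k - g k)"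
    "H2_norm g \<le> H2_norm (h m) + H2_norm (\<lambda>k. h m k - g k)"
    using H2_norm_triangle[OF g H2_diff[OF h g], of m] H2_norm_triangle[OF h[of m] H2_diff[OF g h[of m]]]
    by (simp_all add: H2_norm_minus_commute[of g])
  then show "norm (H2_norm (h m) - H2_norm g) \<le> H2_norm (\<lambda>k. h m k - g k)"
    by (simp add: abs_le_iff)
qed

lemma H2_complete:
  fixes h :: "nat \<Rightarrow> nat \<Rightarrow> complex" and e :: "nat \<Rightarrow> real"
  assumes h: "\<And>m. h m \<in> H2"
    and Cauchy: "\<And>m l. H2_normsq (\<lambda>k. h m k - h l k) \<le> e m + e l"
    and e: "e \<longlonglongrightarrow> 0"
  obtains g where "g \<in> H2" "\<And>m. H2_normsq (\<lambda>k. h m k - g k) \<le> e m"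
proof -
  have partial: "(\<Sum>k\<in>I. (cmod (h m k - h l k))\<^sup>2) \<le> e m + e l" if "finite I" for m l I
    using sum_le_suminf[of "\<lambda>k. (cmod (h m k - h l k))\<^sup>2" I] H2_diff[OF h h] Cauchy[of m l] that
    by (auto simp: H2_def H2_normsq_def)
  have "Cauchy (\<lambda>m. h m k)" for k
  proof (rule metric_CauchyI)
    fix \<epsilon> :: real assume "0 < \<epsilon>"
    then obtain M where M: "\<And>m. m \<ge> M \<Longrightarrow> e m < \<epsilon>\<^sup>2 / 2"
      using order_tendstoD(2)[OF e, of "\<epsilon>\<^sup>2 / 2"] by (auto simp: eventually_sequentially)
    have "dist (h m k) (h l k) < \<epsilon>" if "m \<ge> M" "l \<ge> M" for m l
    proof -
      have "(cmod (h m k - h l k))\<^sup>2 < \<epsilon>\<^sup>2"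
        using partial[of "{k}" m l] M[OF that(1)] M[OF that(2)] by simp
      then show ?thesis
        using \<open>0 < \<epsilon>\<close> by (simp add: dist_norm power_less_imp_less_base)
    qed
    then show "\<exists>M. \<forall>m\<ge>M. \<forall>l\<ge>M. dist (h m k) (h l k) < \<epsilon>" by blast
  qed
  then have g: "(\<lambda>m. h m k) \<longlonglongrightarrow> lim (\<lambda>m. h m k)" for k
    by (simp add: Cauchy_convergent_iff convergent_LIMSEQ_iff)
  define g where "g k = lim (\<lambda>m. h m k)" for k
  have partial_limit: "(\<Sum>k<K. (cmod (h m k - g k))\<^sup>2) \<le> e m" for m K
  proof (rule tendsto_le[OF sequentially_bot])
    show "(\<lambda>l. e m + e l) \<longlonglongrightarrow> e m"
      using tendsto_add[OF tendsto_const e, of "e m"] by simp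
    show "(\<lambda>l. \<Sum>k<K. (cmod (h m k - h l k))\<^sup>2) \<longlonglongrightarrow> (\<Sum>k<K. (cmod (h m k - g k))\<^sup>2)"
      unfolding g_def by (intro tendsto_intros g)
  qed (use partial in auto)
  then have summable: "summable (\<lambda>k. (cmod (h m k - g k))\<^sup>2)" for m
    by (intro summableI_nonneg_bounded) auto
  have "g \<in> H2"
    using H2_diff[OF h[of 0], of "\<lambda>k. h 0 k - g k"] summable[of 0] by (simp add: H2_def)
  moreover have "H2_normsq (\<lambda>k. h m k - g k) \<le> e m" for m
    unfolding H2_normsq_def using summable partial_limit by (rule suminf_le_const)
  ultimately show ?thesis
    using that by blast
qed

lemma H2_inner_eq_0_if_closest:
  assumes f: "f \<in> H2" and g: "g \<in> H2"
    and closest: "\<And>c. H2_normsq f \<le> H2_normsq (\<lambda>k. f k - c * g k)"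
  shows "H2_inner f g = 0"
proof -
  define z where "z = H2_inner f g"
  define r where "r = 1 / (H2_normsq g + 1)"
  have r: "r > 0" "r * H2_normsq g < 1"
    using H2_normsq_nonneg[OF g] by (auto simp: r_def field_simps)
  have "Re (cnj (of_real r * z) * z) = r * (cmod z)\<^sup>2"
    unfolding cmod_power2 by (simp add: algebra_simps power2_eq_square)
  moreover have "(cmod (of_real r * z))\<^sup>2 = r\<^sup>2 * (cmod z)\<^sup>2"
    using r by (simp add: norm_mult power_mult_distrib)
  ultimately have "H2_normsq f \<le> H2_normsq f - 2 * (r * (cmod z)\<^sup>2) + r\<^sup>2 * (cmod z)\<^sup>2 * H2_normsq g"
    using closest[of "of_real r * z"] H2_normsq_diff_cmult[OF f g, of "of_real r * z"]
    by (simp add: z_def)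
  then have "r * (2 * (cmod z)\<^sup>2) \<le> r * ((r * H2_normsq g) * (cmod z)\<^sup>2)"
    by (simp add: power2_eq_square algebra_simps)
  then have "2 * (cmod z)\<^sup>2 \<le> (r * H2_normsq g) * (cmod z)\<^sup>2"
    using r by simp
  also have "\<dots> \<le> (cmod z)\<^sup>2"
    using r H2_normsq_nonneg[OF g] by (intro mult_left_le_one_le) auto
  finally show ?thesis
    by (simp add: z_def)
qed

lemma H2_minimizing_sequence_Cauchy:
  assumes V: "H2_subspace V" and f: "f \<in> H2" and vs: "\<And>m. vs m \<in> V"
    and lower: "\<And>v. v \<in> V \<Longrightarrow> \<delta> \<le> H2_normsq (\<lambda>k. f k - v k)"
    and near: "\<And>m. H2_normsq (\<lambda>k. f k - vs m k) < \<delta> + 1 / real (Suc m)"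
  shows "H2_normsq (\<lambda>k. (f k - vs m k) - (f k - vs l k)) \<le> 2 / real (Suc m) + 2 / real (Suc l)"
proof -
  have residual: "(\<lambda>k. f k - vs m k) \<in> H2" for m
    by (intro H2_diff f H2_subspace_subset[OF V vs])
  define mid where "mid = (\<lambda>k. (1/2) * (vs m k + vs l k))"
  have "mid \<in> V"
    unfolding mid_def by (intro H2_subspace_cmult H2_subspace_add V vs)
  have "(\<lambda>k. (f k - vs m k) + (f k - vs l k)) = (\<lambda>k. 2 * (f k - mid k))"
    by (auto simp: mid_def algebra_simps)
  then have "H2_normsq (\<lambda>k. (f k - vs m k) + (f k - vs l k)) = 4 * H2_normsq (\<lambda>k. f k - mid k)"
    using H2_normsq_cmult[OF H2_diff[OF f H2_subspace_subset[OF V \<open>mid \<in> V\<close>]], of 2] by simp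
  then have "4 * \<delta> \<le> H2_normsq (\<lambda>k. (f k - vs m k) + (f k - vs l k))"
    using lower[OF \<open>mid \<in> V\<close>] by simp
  moreover have "2 / real (Suc m) = 2 * (1 / real (Suc m))" "2 / real (Suc l) = 2 * (1 / real (Suc l))"
    by simp_all
  ultimately show ?thesis
    using H2_parallelogram[OF residual residual, of m l] near[of m] near[of l] by linarith
qed

lemma H2_minimizing_sequence_converges:
  assumes V: "H2_subspace V" and f: "f \<in> H2" and vs: "\<And>m. vs m \<in> V"
    and lower: "\<And>v. v \<in> V \<Longrightarrow> \<delta> \<le> H2_normsq (\<lambda>k. f k - v k)"
    and near: "\<And>m. H2_normsq (\<lambda>k. f k - vs m k) < \<delta> + 1 / real (Suc m)"
  obtains g where "g \<in> H2" "(\<lambda>m. H2_norm (\<lambda>k. f k - vs m k - g k)) \<longlonglongrightarrow> 0"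
proof -
  note VH2 = H2_subspace_subset[OF V]
  obtain g where g: "g \<in> H2" and rate: "\<And>m. H2_normsq (\<lambda>k. f k - vs m k - g k) \<le> 2 / real (Suc m)"
  proof (rule H2_complete[of "\<lambda>m k. f k - vs m k" "\<lambda>m. 2 / real (Suc m)"])
    show "(\<lambda>k. f k - vs m k) \<in> H2" for m
      by (intro H2_diff f VH2 vs)
    show "H2_normsq (\<lambda>k. (f k - vs m k) - (f k - vs l k)) \<le> 2 / real (Suc m) + 2 / real (Suc l)" for m l
      by (rule H2_minimizing_sequence_Cauchy[OF assms])
    show "(\<lambda>m. 2 / real (Suc m)) \<longlonglongrightarrow> 0"
      using LIMSEQ_Suc[OF lim_const_over_n[of 2]] by simp
  qed (rule that)
  have bound: "norm (H2_norm (\<lambda>k. f k - vs m k - g k)) \<le> sqrt (2 / real (Suc m))" for m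
    using rate[of m] H2_normsq_nonneg[OF H2_diff[OF H2_diff[OF f VH2[OF vs]] g]]
    by (simp add: H2_norm_eq_sqrt_normsq)
  have "(\<lambda>m. sqrt (2 / real (Suc m))) \<longlonglongrightarrow> 0"
    using tendsto_real_sqrt[OF LIMSEQ_Suc[OF lim_const_over_n[of 2]]] by simp
  then have "(\<lambda>m. H2_norm (\<lambda>k. f k - vs m k - g k)) \<longlonglongrightarrow> 0"
    by (rule Lim_null_comparison[OF always_eventually[OF allI[OF bound]]])
  with g show ?thesis
    by (rule that)
qed

lemma H2_minimizing_sequence_limit:
  assumes V: "H2_subspace V" and f: "f \<in> H2" and vs: "\<And>m. vs m \<in> V"
    and lower: "\<And>v. v \<in> V \<Longrightarrow> \<delta> \<le> H2_normsq (\<lambda>k. f k - v k)"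
    and near: "\<And>m. H2_normsq (\<lambda>k. f k - vs m k) < \<delta> + 1 / real (Suc m)"
  obtains g where "g \<in> H2" "\<And>u. u \<in> V \<Longrightarrow> \<delta> \<le> H2_normsq (\<lambda>k. g k - u k)" "H2_normsq g \<le> \<delta>"
proof -
  note VH2 = H2_subspace_subset[OF V]
  obtain g where g: "g \<in> H2" and "(\<lambda>m. H2_norm (\<lambda>k. f k - vs m k - g k)) \<longlonglongrightarrow> 0"
    using H2_minimizing_sequence_converges[OF assms] by blast
  moreover have "(\<lambda>k. f k - vs m k - u k - (g k - u k)) = (\<lambda>k. f k - vs m k - g k)" for m u
    by (simp add: algebra_simps)
  ultimately have limit: "(\<lambda>m. H2_norm (\<lambda>k. f k - vs m k - u k)) \<longlonglongrightarrow> H2_norm (\<lambda>k. g k - u k)"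
    if "u \<in> V" for u
    using that by (intro tendsto_H2_norm H2_diff f g VH2 vs) simp_all
  have "\<delta> \<le> H2_normsq (\<lambda>k. g k - u k)" if "u \<in> V" for u
  proof -
    have "sqrt \<delta> \<le> H2_norm (\<lambda>k. f k - vs m k - u k)" for m
      using lower[OF H2_subspace_add[OF V vs that]] by (simp add: H2_norm_eq_sqrt_normsq diff_diff_add)
    then have "sqrt \<delta> \<le> H2_norm (\<lambda>k. g k - u k)"
      by (intro LIMSEQ_le_const[OF limit[OF that]]) blast
    then show ?thesis
      by (simp add: H2_norm_eq_sqrt_normsq)
  qed
  moreover have "H2_normsq g \<le> \<delta>"
  proof -
    have "H2_norm (\<lambda>k. f k - vs m k - 0) \<le> sqrt (\<delta> + 1 / real (Suc m))" for m
      using near[of m] by (simp add: H2_norm_eq_sqrt_normsq)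
    moreover have "(\<lambda>m. sqrt (\<delta> + 1 / real (Suc m))) \<longlonglongrightarrow> sqrt (\<delta> + 0)"
      using LIMSEQ_Suc[OF lim_const_over_n[of 1]] by (intro tendsto_intros) simp
    ultimately have "H2_norm (\<lambda>k. g k - 0) \<le> sqrt (\<delta> + 0)"
      by (intro LIMSEQ_le[OF limit[OF H2_subspace_zero[OF V]]]) blast+
    then show ?thesis
      by (simp add: H2_norm_eq_sqrt_normsq)
  qed
  ultimately show ?thesis
    using that g by blast
qed

lemma H2_orthogonal_residual:
  assumes V: "H2_subspace V" and f: "f \<in> H2"
  obtains g where "g \<in> H2" "\<And>w. w \<in> V \<Longrightarrow> H2_inner g w = 0"
    "\<And>e. e > 0 \<Longrightarrow> \<exists>v\<in>V. H2_normsq (\<lambda>k. f k - v k) < H2_normsq g + e"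
proof -
  define \<delta> where "\<delta> = (INF v\<in>V. H2_normsq (\<lambda>k. f k - v k))"
  have bdd: "bdd_below ((\<lambda>v. H2_normsq (\<lambda>k. f k - v k)) ` V)"
    using H2_normsq_nonneg[OF H2_diff[OF f H2_subspace_subset[OF V]]] by (auto simp: bdd_below_def)
  have lower: "\<delta> \<le> H2_normsq (\<lambda>k. f k - v k)" if "v \<in> V" for v
    unfolding \<delta>_def using bdd that by (rule cINF_lower)
  have approx: "\<exists>v\<in>V. H2_normsq (\<lambda>k. f k - v k) < \<delta> + e" if "e > 0" for e
    using cINF_less_iff[OF _ bdd, of "\<delta> + e"] H2_subspace_zero[OF V] that by (auto simp: \<delta>_def)
  obtain vs where vs: "\<And>m. vs m \<in> V" "\<And>m. H2_normsq (\<lambda>k. f k - vs m k) < \<delta> + 1 / real (Suc m)"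
    using approx[of "1 / real (Suc _)"] by (metis of_nat_0_less_iff zero_less_Suc zero_less_divide_1_iff)
  obtain g where g: "g \<in> H2" and above: "\<And>u. u \<in> V \<Longrightarrow> \<delta> \<le> H2_normsq (\<lambda>k. g k - u k)"
    and below: "H2_normsq g \<le> \<delta>"
    using H2_minimizing_sequence_limit[OF V f vs(1) lower vs(2)] by blast
  show ?thesis
  proof (rule that[OF g])
    show "H2_inner g w = 0" if "w \<in> V" for w
    proof (rule H2_inner_eq_0_if_closest[OF g H2_subspace_subset[OF V that]])
      show "H2_normsq g \<le> H2_normsq (\<lambda>k. g k - c * w k)" for c
        using below above[OF H2_subspace_cmult[OF V that, of c]] by simp
    qed
    have "\<delta> \<le> H2_normsq g"
      using above[OF H2_subspace_zero[OF V]] by simp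
    then show "\<exists>v\<in>V. H2_normsq (\<lambda>k. f k - v k) < H2_normsq g + e" if "e > 0" for e
      using approx[OF that] by (meson add_right_mono order_less_le_trans)
  qed
qed

lemma H2_subspace_dense_if_orthogonal_trivial:
  assumes V: "H2_subspace V"
    and trivial: "\<And>g. g \<in> H2 \<Longrightarrow> (\<And>w. w \<in> V \<Longrightarrow> H2_inner g w = 0) \<Longrightarrow> g = (\<lambda>k. 0)"
    and f: "f \<in> H2" and e: "e > 0"
  shows "\<exists>v\<in>V. H2_norm (\<lambda>k. f k - v k) < e"
proof -
  obtain g where g: "g \<in> H2" and orthogonal: "\<And>w. w \<in> V \<Longrightarrow> H2_inner g w = 0"
    and approx: "\<And>e. e > 0 \<Longrightarrow> \<exists>v\<in>V. H2_normsq (\<lambda>k. f k - v k) < H2_normsq g + e"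
    using H2_orthogonal_residual[OF V f] by blast
  have "g = (\<lambda>k. 0)"
    using trivial[OF g orthogonal] .
  then have "H2_normsq g = 0"
    by (simp add: H2_normsq_def)
  then obtain v where "v \<in> V" "H2_normsq (\<lambda>k. f k - v k) < e\<^sup>2"
    using approx[of "e\<^sup>2"] e by auto
  moreover from real_sqrt_less_mono[OF this(2)] e have "H2_norm (\<lambda>k. f k - v k) < e"
    by (simp add: H2_norm_def H2_normsq_def)
  ultimately show ?thesis
    by blast
qed

lemma norm_Suc_powr_diff_le:
  fixes s :: complex
  assumes k: "k \<ge> 1" and s: "Re s \<ge> 0"
  shows "cmod (of_nat (k + 1) powr (1 - s) - of_nat k powr (1 - s)) \<le> cmod (1 - s) * real k powr (- Re s)"
proof -
  define S where "S = closed_segment (of_nat k :: complex) (of_nat (Suc k))"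
  have S_real: "z \<in> \<real> \<and> Re z \<ge> real k" if "z \<in> S" for z
  proof -
    from that obtain u :: real where u: "0 \<le> u" "u \<le> 1" "z = (1 - u) *\<^sub>R of_nat k + u *\<^sub>R of_nat (Suc k)"
      unfolding S_def in_segment by auto
    then have "z = of_real (real k + u)"
      by (simp add: scaleR_conv_of_real algebra_simps)
    then show ?thesis
      using u by simp
  qed
  have "cmod (of_nat (k + 1) powr (1 - s) - of_nat k powr (1 - s))
      \<le> cmod (1 - s) * real k powr (- Re s) * cmod (of_nat (k + 1) - (of_nat k :: complex))"
  proof (rule field_differentiable_bound[where f = "\<lambda>z. z powr (1 - s)" and f' = "\<lambda>z. (1 - s) * z powr (- s)"])
    show "convex S"
      by (simp add: S_def)
    show "((\<lambda>z. z powr (1 - s)) has_field_derivative (1 - s) * z powr (- s)) (at z within S)" if "z \<in> S" for z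
    proof -
      have "z \<notin> \<real>\<^sub>\<le>\<^sub>0"
        using S_real[OF that] k by (auto simp: nonpos_Reals_def Reals_def)
      then show ?thesis
        using has_field_derivative_powr[of z "1 - s"] by (auto intro: has_field_derivative_at_within)
    qed
    show "cmod ((1 - s) * z powr (- s)) \<le> cmod (1 - s) * real k powr (- Re s)" if "z \<in> S" for z
    proof -
      have "cmod (z powr (- s)) = Re z powr (- Re s)"
        using S_real[OF that] k by (subst norm_powr_real_powr) auto
      also have "\<dots> \<le> real k powr (- Re s)"
        using S_real[OF that] k s by (intro powr_mono2') auto
      finally show ?thesis
        by (simp add: norm_mult mult_left_mono)
    qed
  qed (auto simp: S_def)
  then show ?thesis
    by simp
qed

lemma zeta_kernel_in_H2:
  assumes s: "Re s > 1/2"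
  shows "zeta_kernel s \<in> H2"
proof -
  define C where "C = (cmod (1 - cnj s) / cmod (cnj s))\<^sup>2"
  have bound: "(cmod (zeta_kernel s k))\<^sup>2 \<le> C * real k powr (- 2 * Re s)" if "k \<ge> 1" for k
  proof -
    have "cmod (zeta_kernel s k) = cmod (of_nat (k + 1) powr (1 - cnj s) - of_nat k powr (1 - cnj s)) / cmod (cnj s)"
      using that by (simp add: zeta_kernel_def zeta_phi_def norm_mult norm_divide)
    also have "\<dots> \<le> cmod (1 - cnj s) * real k powr (- Re s) / cmod (cnj s)"
      using that s by (intro divide_right_mono) (auto intro: norm_Suc_powr_diff_le[of k "cnj s", simplified])
    finally have "(cmod (zeta_kernel s k))\<^sup>2 \<le> (cmod (1 - cnj s) * real k powr (- Re s) / cmod (cnj s))\<^sup>2"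
      by (simp add: power_mono)
    also have "\<dots> = C * real k powr (- 2 * Re s)"
      by (simp add: C_def power_divide power_mult_distrib power2_eq_square powr_add[symmetric])
    finally show ?thesis .
  qed
  have "summable (\<lambda>k. C * real k powr (- 2 * Re s))"
    using s by (intro summable_mult) (simp add: summable_real_powr_iff)
  then show ?thesis
    unfolding H2_def mem_Collect_eq by (rule summable_comparison_test'[where N = 1]) (use bound in auto)
qed

definition kernel_span :: "real set \<Rightarrow> (nat \<Rightarrow> complex) set" where
  "kernel_span B = {(\<lambda>k. \<Sum>i<N. c i * zeta_kernel (1 + \<i> * of_real (ts i)) k) | (N :: nat) ts c. \<forall>i<N. ts i \<in> B}"

lemma zeta_kernel_in_kernel_span: "t \<in> B \<Longrightarrow> zeta_kernel (1 + \<i> * of_real t) \<in> kernel_span B"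
  unfolding kernel_span_def by (rule CollectI, rule exI[of _ 1], rule exI[of _ "\<lambda>_. t"], rule exI[of _ "\<lambda>_. 1"]) auto

lemma H2_subspace_kernel_span: "H2_subspace (kernel_span B)"
  unfolding H2_subspace_def
proof (intro conjI ballI allI subsetI)
  show "v \<in> H2" if "v \<in> kernel_span B" for v
    using that by (auto simp: kernel_span_def intro!: H2_sum H2_cmult zeta_kernel_in_H2)
  show "(\<lambda>k. 0) \<in> kernel_span B"
    unfolding kernel_span_def by (rule CollectI, rule exI[of _ 0]) simp
  show "(\<lambda>k. a * v k) \<in> kernel_span B" if v: "v \<in> kernel_span B" for a v
  proof -
    obtain N :: nat and ts c where "\<forall>i<N. ts i \<in> B" "v = (\<lambda>k. \<Sum>i<N. c i * zeta_kernel (1 + \<i> * of_real (ts i)) k)"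
      using v by (auto simp: kernel_span_def)
    then show ?thesis
      unfolding kernel_span_def
      by (intro CollectI exI[of _ N] exI[of _ ts] exI[of _ "\<lambda>i. a * c i"]) (simp add: sum_distrib_left mult.assoc)
  qed
  show "(\<lambda>k. v k + w k) \<in> kernel_span B" if span: "v \<in> kernel_span B" "w \<in> kernel_span B" for v w
  proof -
    obtain N :: nat and ts c where v: "\<forall>i<N. ts i \<in> B" "v = (\<lambda>k. \<Sum>i<N. c i * zeta_kernel (1 + \<i> * of_real (ts i)) k)"
      using span(1) by (auto simp: kernel_span_def)
    obtain N' :: nat and ts' c' where w: "\<forall>i<N'. ts' i \<in> B" "w = (\<lambda>k. \<Sum>i<N'. c' i * zeta_kernel (1 + \<i> * of_real (ts' i)) k)"
      using span(2) by (auto simp: kernel_span_def)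
    define tt where "tt i = (if i < N then ts i else ts' (i - N))" for i
    define cc where "cc i = (if i < N then c i else c' (i - N))" for i
    have split: "(\<Sum>i<N + N'. F i) = (\<Sum>i<N. F i) + (\<Sum>i<N'. F (i + N))" for F :: "nat \<Rightarrow> complex"
      by (induction N') (simp_all add: ac_simps)
    have "(\<lambda>k. v k + w k) = (\<lambda>k. \<Sum>i<N + N'. cc i * zeta_kernel (1 + \<i> * of_real (tt i)) k)"
      unfolding split by (simp add: v w tt_def cc_def)
    moreover have "\<forall>i<N + N'. tt i \<in> B"
      using v w by (auto simp: tt_def)
    ultimately show ?thesis
      unfolding kernel_span_def by blast
  qed
qed

lemma kernels_span_dense_if_orthogonal_trivial:
  assumes "\<And>g. g \<in> H2 \<Longrightarrow> (\<And>t. t \<in> B \<Longrightarrow> H2_inner g (zeta_kernel (1 + \<i> * of_real t)) = 0) \<Longrightarrow> g = (\<lambda>k. 0)"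
  shows "kernels_span_dense B"
  unfolding kernels_span_dense_def
proof (intro ballI allI impI)
  fix f :: "nat \<Rightarrow> complex" and e :: real
  assume "f \<in> H2" "e > 0"
  then obtain v where "v \<in> kernel_span B" "H2_norm (\<lambda>k. f k - v k) < e"
    using H2_subspace_dense_if_orthogonal_trivial[OF H2_subspace_kernel_span] assms zeta_kernel_in_kernel_span
    by metis
  then show "\<exists>(N::nat) ts c. (\<forall>i<N. ts i \<in> B) \<and>
      H2_norm (\<lambda>k. f k - (\<Sum>i<N. c i * zeta_kernel (1 + \<i> * of_real (ts i)) k)) < e"
    by (auto simp: kernel_span_def)
qed

definition kernel_series :: "(nat \<Rightarrow> complex) \<Rightarrow> complex \<Rightarrow> complex" where
  "kernel_series g s = (\<Sum>k. g k * (of_nat (k + 1) powr (1 - s) - of_nat k powr (1 - s)))"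

lemma kernel_series_eq_H2_inner:
  assumes g: "g \<in> H2" and s: "Re s > 1/2"
  shows "kernel_series g s = - s * H2_inner g (zeta_kernel s)"
proof -
  have "s \<noteq> 0"
    using s by auto
  have cnj_powr_nat: "cnj (of_nat j powr (1 - cnj s)) = of_nat j powr (1 - s)" for j
    by (subst cnj_powr) auto
  have "g k * (of_nat (k + 1) powr (1 - s) - of_nat k powr (1 - s)) = - s * (g k * cnj (zeta_kernel s k))" for k
    using \<open>s \<noteq> 0\<close> cnj_powr_nat[of k] cnj_powr_nat[of "k + 1"]
    by (simp add: zeta_kernel_def zeta_phi_def)
  then show ?thesis
    unfolding kernel_series_def H2_inner_def
    using suminf_mult[OF summable_H2_inner[OF g zeta_kernel_in_H2[OF s]], of "- s"] by simp
qed

lemma has_field_derivative_of_nat_powr_1_minus: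
  "((\<lambda>s. of_nat n powr (1 - s)) has_field_derivative - (Ln (of_nat n) * of_nat n powr (1 - s))) (at s)"
proof (cases "n = 0")
  case False
  have "((\<lambda>s. of_nat n powr (1 - s)) has_field_derivative Ln (of_nat n) * of_nat n powr (1 - s) * (- 1)) (at s)"
    using False by (intro DERIV_chain2[where f = "\<lambda>z. of_nat n powr z"] derivative_eq_intros has_field_derivative_powr_right) auto
  then show ?thesis
    by simp
qed simp

lemma summable_norm_mult_powr_if_H2:
  assumes g: "g \<in> H2" and \<sigma>: "1/2 < \<sigma>"
  shows "summable (\<lambda>k. cmod (g k) * real k powr (- \<sigma>))"
proof (rule summable_comparison_test')
  show "summable (\<lambda>k. ((cmod (g k))\<^sup>2 + real k powr (- 2 * \<sigma>)) / 2)"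
    using g \<sigma> by (auto simp: H2_def summable_real_powr_iff intro!: summable_divide summable_add)
  fix k
  have "(real k powr (- \<sigma>))\<^sup>2 = real k powr (- 2 * \<sigma>)"
    by (simp add: power2_eq_square powr_add[symmetric])
  then show "norm (cmod (g k) * real k powr (- \<sigma>)) \<le> ((cmod (g k))\<^sup>2 + real k powr (- 2 * \<sigma>)) / 2"
    using sum_squares_ge_zero[of "cmod (g k) - real k powr (- \<sigma>)" 0]
    by (simp add: power2_eq_square algebra_simps)
qed

lemma norm_Suc_powr_diff_le_on_ball:
  assumes k: "k \<ge> 1" and \<sigma>: "0 \<le> \<sigma>" "\<sigma> < Re s" and R: "cmod s < R"
  shows "cmod (of_nat (k + 1) powr (1 - s) - of_nat k powr (1 - s)) \<le> (1 + R) * real k powr (- \<sigma>)"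
proof -
  have "cmod (of_nat (k + 1) powr (1 - s) - of_nat k powr (1 - s)) \<le> cmod (1 - s) * real k powr (- Re s)"
    using \<sigma> k by (intro norm_Suc_powr_diff_le) auto
  also have "\<dots> \<le> (1 + R) * real k powr (- \<sigma>)"
  proof (rule mult_mono)
    show "cmod (1 - s) \<le> 1 + R"
      using norm_triangle_ineq4[of 1 s] R by simp
    show "real k powr (- Re s) \<le> real k powr (- \<sigma>)"
      using \<sigma> k by (intro powr_mono) auto
    show "0 \<le> 1 + R"
      using norm_ge_zero[of s] R by linarith
  qed auto
  finally show ?thesis .
qed

lemma kernel_series_holomorphic_on_ball:
  assumes g: "g \<in> H2" and \<sigma>: "1/2 < \<sigma>"
  shows "kernel_series g holomorphic_on ({s. \<sigma> < Re s} \<inter> ball 0 R)"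
proof -
  define S where "S = {s. \<sigma> < Re s} \<inter> ball 0 R"
  have "open S"
    unfolding S_def by (intro open_Int open_halfspace_Re_gt open_ball)
  define h where "h k = cmod (g k) * ((1 + R) * real k powr (- \<sigma>))" for k
  have "summable h"
    unfolding h_def mult.left_commute[of "cmod _"]
    using summable_norm_mult_powr_if_H2[OF g \<sigma>] by (rule summable_mult)
  define F where "F k s = g k * (of_nat (k + 1) powr (1 - s) - of_nat k powr (1 - s))" for k s
  define F' where "F' k s = g k * (- (Ln (of_nat (k + 1)) * of_nat (k + 1) powr (1 - s)) + Ln (of_nat k) * of_nat k powr (1 - s))" for k s
  have deriv: "(F k has_field_derivative F' k s) (at s)" if "s \<in> S" for k s
    using DERIV_cmult[OF DERIV_diff[OF has_field_derivative_of_nat_powr_1_minus[of "k + 1" s]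
        has_field_derivative_of_nat_powr_1_minus[of k s]], of "g k"]
    by (simp add: F_def[abs_def] F'_def)
  have bound: "\<forall>\<^sub>F k in sequentially. \<forall>s\<in>S. norm (F k s) \<le> h k"
    unfolding eventually_sequentially
  proof (intro exI[of _ 1] allI impI ballI)
    fix k :: nat and s assume "k \<ge> 1" "s \<in> S"
    then have "cmod (of_nat (k + 1) powr (1 - s) - of_nat k powr (1 - s)) \<le> (1 + R) * real k powr (- \<sigma>)"
      using \<sigma> by (intro norm_Suc_powr_diff_le_on_ball) (auto simp: S_def)
    then show "norm (F k s) \<le> h k"
      unfolding F_def h_def norm_mult by (rule mult_left_mono) simp
  qed
  obtain G G' where G: "\<forall>s\<in>S. (\<lambda>k. F k s) sums G s \<and> (\<lambda>k. F' k s) sums G' s \<and> (G has_field_derivative G' s) (at s)"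
    by (rule series_and_derivative_comparison[OF \<open>open S\<close> \<open>summable h\<close> deriv bound])
  have eq: "G s = kernel_series g s" if "s \<in> S" for s
    using G that by (simp add: kernel_series_def F_def sums_iff)
  have "(kernel_series g has_field_derivative G' s) (at s)" if "s \<in> S" for s
  proof (rule has_field_derivative_transform_within_open[OF _ \<open>open S\<close> that eq])
    show "(G has_field_derivative G' s) (at s)"
      using G that by blast
  qed
  then show ?thesis
    unfolding S_def[symmetric] holomorphic_on_open[OF \<open>open S\<close>] by blast
qed

lemma kernel_series_holomorphic:
  assumes g: "g \<in> H2"
  shows "kernel_series g holomorphic_on {s. 1/2 < Re s}"
proof -
  have "kernel_series g field_differentiable (at s)" if s: "1/2 < Re s" for s
  proof -
    define \<sigma> where "\<sigma> = (1/2 + Re s) / 2"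
    have "kernel_series g holomorphic_on ({z. \<sigma> < Re z} \<inter> ball 0 (cmod s + 1))"
      using s by (intro kernel_series_holomorphic_on_ball[OF g]) (simp add: \<sigma>_def)
    moreover have "open ({z. \<sigma> < Re z} \<inter> ball 0 (cmod s + 1))"
      by (intro open_Int open_halfspace_Re_gt open_ball)
    moreover have "s \<in> {z. \<sigma> < Re z} \<inter> ball 0 (cmod s + 1)"
      using s by (simp add: \<sigma>_def)
    ultimately show ?thesis
      by (rule holomorphic_on_imp_differentiable_at)
  qed
  then show ?thesis
    by (simp add: holomorphic_on_def field_differentiable_at_within)
qed

lemma kernel_series_eq_0_if_zeros_dense:
  assumes g: "g \<in> H2" and a: "a > 0"
    and dense: "\<And>c d. 0 \<le> c \<Longrightarrow> c < d \<Longrightarrow> d \<le> a \<Longrightarrow> \<exists>t\<in>B. c < t \<and> t < d"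
    and zeros: "\<And>t. t \<in> B \<Longrightarrow> kernel_series g (1 + \<i> * of_real t) = 0"
    and s: "1/2 < Re s"
  shows "kernel_series g s = 0"
proof (rule analytic_continuation[OF kernel_series_holomorphic[OF g]])
  define U where "U = (\<lambda>t. 1 + \<i> * of_real t) ` B"
  show "U \<subseteq> {s. 1/2 < Re s}" "\<And>z. z \<in> U \<Longrightarrow> kernel_series g z = 0"
    using zeros by (auto simp: U_def)
  show "1 + \<i> * of_real (a/2) islimpt U"
    unfolding islimpt_approachable
  proof (intro allI impI)
    fix e :: real assume "e > 0"
    then have "0 \<le> a/2" "a/2 < a/2 + min e (a/2)" "a/2 + min e (a/2) \<le> a"
      using a by auto
    then obtain t where t: "t \<in> B" "a/2 < t" "t < a/2 + min e (a/2)"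
      using dense by blast
    have "dist (1 + \<i> * of_real t) (1 + \<i> * of_real (a/2)) = cmod (\<i> * of_real (t - a/2))"
      by (simp add: dist_norm algebra_simps)
    also have "\<dots> = \<bar>t - a/2\<bar>"
      by (simp only: norm_mult norm_ii norm_of_real mult_1)
    moreover have "1 + \<i> * of_real t \<in> U"
      using t by (simp add: U_def)
    moreover have "1 + \<i> * of_real t \<noteq> 1 + \<i> * of_real (a/2)"
      using t by (simp add: complex_eq_iff)
    ultimately show "\<exists>x'\<in>U. x' \<noteq> 1 + \<i> * of_real (a/2) \<and> dist x' (1 + \<i> * of_real (a/2)) < e"
      using t by (intro bexI[of _ "1 + \<i> * of_real t"]) auto
  qed
  show "open {s. 1/2 < Re s}"
    by (rule open_halfspace_Re_gt)
  show "connected {s. 1/2 < Re s}"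
    by (intro convex_connected convex_halfspace_Re_gt)
qed (use s in auto)

lemma summable_bounded_div_Suc_power:
  fixes b :: "nat \<Rightarrow> complex"
  assumes b: "\<And>j. cmod (b j) \<le> C" and M: "M \<ge> 2"
  shows "summable (\<lambda>j. b j / of_nat (Suc j) ^ M)"
proof (rule summable_comparison_test')
  show "summable (\<lambda>j. C * inverse (real (Suc j) ^ M))"
    using inverse_power_summable[OF M, where 'a = real]
    by (intro summable_mult) (simp only: summable_Suc_iff[where f = "\<lambda>n. inverse (real n ^ M)"])
  show "norm (b j / of_nat (Suc j) ^ M) \<le> C * inverse (real (Suc j) ^ M)" for j
    unfolding norm_divide norm_power norm_of_nat
    using b[of j] by (simp add: divide_inverse mult_right_mono del: of_nat_Suc)
qed

lemma tendsto_scaled_dirichlet_series: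
  fixes b :: "nat \<Rightarrow> complex"
  assumes b: "\<And>j. cmod (b j) \<le> C"
  shows "(\<lambda>M. \<Sum>j. b (j + m) * (of_nat (Suc m) / of_nat (j + Suc m)) ^ M) \<longlonglongrightarrow> b m"
proof -
  have "0 \<le> C"
    using b[of 0] norm_ge_zero[of "b 0"] by linarith
  define r where "r j = real (Suc m) / real (j + Suc m)" for j
  have r: "0 \<le> r j" "r j \<le> 1" "j > 0 \<Longrightarrow> r j < 1" for j
    by (auto simp: r_def)
  have norm_ratio: "cmod (of_nat (Suc m) / of_nat (j + Suc m)) = r j" for j
    by (simp add: r_def norm_divide del: of_nat_Suc)
  have limit: "((\<lambda>M. b (j + m) * (of_nat (Suc m) / of_nat (j + Suc m)) ^ M) \<longlongrightarrow> (if j = 0 then b m else 0)) sequentially" for j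
  proof (cases "j = 0")
    case False
    then show ?thesis
      using r(3)[of j] norm_ratio[of j] by (auto intro!: tendsto_mult_right_zero LIMSEQ_power_zero)
  qed (simp del: of_nat_Suc)
  have bound: "\<forall>\<^sub>F (j, M) in sequentially \<times>\<^sub>F sequentially.
      norm (b (j + m) * (of_nat (Suc m) / of_nat (j + Suc m)) ^ M) \<le> C * (r j)\<^sup>2"
    unfolding eventually_prod_sequentially prod.case
  proof (intro exI[of _ 2] allI impI)
    fix M j :: nat assume "M \<ge> 2" "j \<ge> 2"
    then have "r j ^ M \<le> (r j)\<^sup>2"
      using r[of j] by (intro power_decreasing) auto
    then show "norm (b (j + m) * (of_nat (Suc m) / of_nat (j + Suc m)) ^ M) \<le> C * (r j)\<^sup>2"
      unfolding norm_mult norm_power norm_ratio using b[of "j + m"] r[of j] \<open>0 \<le> C\<close> by (intro mult_mono) auto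
  qed
  have summable: "summable (\<lambda>j. C * (r j)\<^sup>2)"
  proof -
    have "summable (\<lambda>n. (real (Suc m))\<^sup>2 * inverse (real n ^ 2))"
      using inverse_power_summable[of 2, where 'a = real] by (intro summable_mult) simp
    then have "summable (\<lambda>j. (real (Suc m))\<^sup>2 * inverse (real (j + Suc m) ^ 2))"
      by (subst summable_iff_shift[where k = "Suc m"])
    moreover have "(\<lambda>j. C * (r j)\<^sup>2) = (\<lambda>j. C * ((real (Suc m))\<^sup>2 * inverse (real (j + Suc m) ^ 2)))"
      by (simp add: r_def power_divide field_simps del: of_nat_Suc of_nat_add)
    ultimately show ?thesis
      by (simp only: summable_mult)
  qed
  have "(\<lambda>M. \<Sum>j. b (j + m) * (of_nat (Suc m) / of_nat (j + Suc m)) ^ M)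
      \<longlonglongrightarrow> (\<Sum>j. if j = 0 then b m else 0)"
    using tannerys_theorem[OF limit bound summable sequentially_bot] by blast
  then show ?thesis
    using sums_single[of 0 "\<lambda>_. b m"] by (simp add: sums_iff)
qed

lemma dirichlet_series_coeff_eq_0:
  fixes b :: "nat \<Rightarrow> complex"
  assumes b: "\<And>j. cmod (b j) \<le> C"
    and zero: "\<And>M. M \<ge> 2 \<Longrightarrow> (\<Sum>j. b j / of_nat (Suc j) ^ M) = 0"
  shows "b m = 0"
proof (induction m rule: less_induct)
  case (less m)
  have vanish: "(\<Sum>j. b (j + m) * (of_nat (Suc m) / of_nat (j + Suc m)) ^ M) = 0" if M: "M \<ge> 2" for M
  proof -
    define f where "f = (\<lambda>j. b j / of_nat (Suc j) ^ M)"
    have "summable f"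
      unfolding f_def using b M by (rule summable_bounded_div_Suc_power)
    have "suminf f = 0"
      unfolding f_def using zero[OF M] .
    moreover have "sum f {..<m} = 0"
      using less.IH by (simp add: f_def)
    ultimately have tail: "(\<Sum>j. f (j + m)) = 0"
      using suminf_split_initial_segment[OF \<open>summable f\<close>, of m] by simp
    have "b (j + m) * (of_nat (Suc m) / of_nat (j + Suc m)) ^ M = of_nat (Suc m) ^ M * f (j + m)" for j
      by (simp add: f_def power_divide del: of_nat_Suc)
    then have "(\<Sum>j. b (j + m) * (of_nat (Suc m) / of_nat (j + Suc m)) ^ M) = (\<Sum>j. of_nat (Suc m) ^ M * f (j + m))"
      by (simp only:)
    also have "\<dots> = of_nat (Suc m) ^ M * (\<Sum>j. f (j + m))"
      using \<open>summable f\<close> by (intro suminf_mult) simp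
    finally show ?thesis
      by (simp only: tail mult_zero_right)
  qed
  then have "(\<lambda>M. \<Sum>j. b (j + m) * (of_nat (Suc m) / of_nat (j + Suc m)) ^ M) \<longlonglongrightarrow> 0"
    by (intro tendsto_eventually eventually_sequentiallyI[of 2])
  then show ?case
    by (rule LIMSEQ_unique[OF tendsto_scaled_dirichlet_series[OF b]])
qed

lemma of_nat_powr_1_minus_Suc:
  "(of_nat j :: complex) powr (1 - of_nat (Suc M)) = (if j = 0 then 0 else inverse (of_nat j ^ M))"
proof (cases "j = 0")
  case False
  then have "(of_nat j :: complex) powr (1 - of_nat (Suc M)) = inverse ((of_nat j :: complex) powr of_nat M)"
    by (simp add: powr_def exp_minus[symmetric])
  then show ?thesis
    using False by (simp add: powr_nat)
qed simp

lemma kernel_series_at_Suc: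
  assumes g: "g \<in> H2" and M: "M \<ge> 2"
  shows "kernel_series g (of_nat (Suc M)) = (\<Sum>j. (g j - g (Suc j)) / of_nat (Suc j) ^ M)"
proof -
  have bounded: "cmod (g j) \<le> H2_norm g" for j
    using norm_coeff_le_H2_norm[OF g] .
  define A where "A j = g j / of_nat (Suc j) ^ M" for j
  define B where "B j = (if j = 0 then 0 else g j / of_nat j ^ M)" for j
  have "A sums (\<Sum>j. A j)"
    unfolding A_def by (intro summable_sums summable_bounded_div_Suc_power[OF bounded M])
  have "(\<lambda>j. B (Suc j)) = (\<lambda>j. g (Suc j) / of_nat (Suc j) ^ M)"
    by (simp add: B_def del: of_nat_Suc)
  then have "(\<lambda>j. B (Suc j)) sums (\<Sum>j. B (Suc j))"
    by (simp only:) (intro summable_sums summable_bounded_div_Suc_power[OF bounded M])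
  moreover from this have "B sums (\<Sum>j. B (Suc j))"
    using sums_Suc_iff[of B] by (simp add: B_def[of 0])
  ultimately have "(\<lambda>j. A j - B j) sums ((\<Sum>j. A j) - (\<Sum>j. B (Suc j)))"
    "(\<lambda>j. A j - B (Suc j)) sums ((\<Sum>j. A j) - (\<Sum>j. B (Suc j)))"
    using \<open>A sums _\<close> by (auto intro: sums_diff)
  moreover have "g j * (of_nat (j + 1) powr (1 - of_nat (Suc M)) - of_nat j powr (1 - of_nat (Suc M))) = A j - B j" for j
    using of_nat_powr_1_minus_Suc[of "Suc j" M] of_nat_powr_1_minus_Suc[of j M]
    by (simp add: A_def B_def divide_inverse algebra_simps del: of_nat_Suc)
  moreover have "A j - B (Suc j) = (g j - g (Suc j)) / of_nat (Suc j) ^ M" for j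
    by (simp add: A_def B_def diff_divide_distrib del: of_nat_Suc)
  ultimately show ?thesis
    unfolding kernel_series_def by (simp add: sums_iff)
qed

lemma H2_eq_0_if_kernel_series_vanishes_at_nat:
  assumes g: "g \<in> H2" and zero: "\<And>M. M \<ge> 2 \<Longrightarrow> kernel_series g (of_nat (Suc M)) = 0"
  shows "g = (\<lambda>k. 0)"
proof -
  have "cmod (g j - g (Suc j)) \<le> 2 * H2_norm g" for j
    using norm_triangle_ineq4[of "g j" "g (Suc j)"] norm_coeff_le_H2_norm[OF g, of j]
      norm_coeff_le_H2_norm[OF g, of "Suc j"] by linarith
  then have "g j - g (Suc j) = 0" for j
    by (rule dirichlet_series_coeff_eq_0) (use zero kernel_series_at_Suc[OF g] in auto)
  then have const: "g j = g 0" for j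
    by (induction j) auto
  then have "(\<lambda>k. (cmod (g k))\<^sup>2) = (\<lambda>k. (cmod (g 0))\<^sup>2)"
    by (intro ext) (subst const, rule refl)
  then have "summable (\<lambda>k. (cmod (g 0))\<^sup>2)"
    using g by (simp add: H2_def)
  then have "(\<lambda>k. (cmod (g 0))\<^sup>2) \<longlonglongrightarrow> 0"
    by (rule summable_LIMSEQ_zero)
  then have "g 0 = 0"
    by (simp add: LIMSEQ_const_iff)
  then show ?thesis
    using const by auto
qed

lemma phi_n_preimage_meets_interval:
  assumes n: "n \<ge> 2" and A: "circle_measurable A" "circle_m A = 1"
    and cd: "0 \<le> c" "c < d" "d \<le> 2*pi / ln (real n)"
  shows "\<exists>t\<in>{t \<in> {0<..<2*pi / ln (real n)}. phi_n n t \<in> A}. c < t \<and> t < d"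
proof (rule ccontr)
  assume miss: "\<not> ?thesis"
  define L where "L = ln (real n)"
  have "L > 0"
    using n by (simp add: L_def)
  define E where "E = {\<theta> \<in> {0..<2*pi}. cis \<theta> \<in> A}"
  have "E \<in> sets lebesgue" "measure lebesgue E = 2*pi"
    using A by (simp_all add: circle_measurable_def circle_m_def E_def)
  have arc: "0 \<le> c * L" "c * L < d * L" "d * L \<le> 2*pi"
    using cd \<open>L > 0\<close> by (auto simp: field_simps L_def)
  have "E \<subseteq> {0..2*pi} - {c*L<..<d*L}"
  proof
    fix \<theta> assume "\<theta> \<in> E"
    have "\<not> (c * L < \<theta> \<and> \<theta> < d * L)"
    proof
      assume "c * L < \<theta> \<and> \<theta> < d * L"
      then have "c < \<theta> / L" "\<theta> / L < d"
        using \<open>L > 0\<close> by (auto simp: field_simps)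
      moreover have "phi_n n (\<theta> / L) \<in> A"
        using \<open>\<theta> \<in> E\<close> \<open>L > 0\<close> by (simp add: E_def phi_n_def L_def)
      ultimately show False
        using miss cd by force
    qed
    then show "\<theta> \<in> {0..2*pi} - {c*L<..<d*L}"
      using \<open>\<theta> \<in> E\<close> by (auto simp: E_def)
  qed
  then have "measure lebesgue E \<le> measure lebesgue ({0..2*pi} - {c*L<..<d*L})"
    using \<open>E \<in> sets lebesgue\<close> by (intro measure_mono_fmeasurable) (auto intro: fmeasurable_Diff)
  also have "\<dots> = 2*pi - (d*L - c*L)"
    using arc by (subst measurable_measure_Diff) auto
  finally show False
    using \<open>measure lebesgue E = 2*pi\<close> arc by simp
qed

theorem mainTheorem15:
  fixes n :: nat and A :: "complex set"
  assumes "n \<ge> 2"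
    and "A \<subseteq> sphere 0 1"
    and "circle_measurable A"
    and "circle_m A = 1"
  shows "kernels_span_dense {t \<in> {0<..<2*pi / ln (real n)}. phi_n n t \<in> A}"
proof (rule kernels_span_dense_if_orthogonal_trivial)
  fix g assume g: "g \<in> H2"
    and orthogonal: "\<And>t. t \<in> {t \<in> {0<..<2*pi / ln (real n)}. phi_n n t \<in> A} \<Longrightarrow>
      H2_inner g (zeta_kernel (1 + \<i> * of_real t)) = 0"
  have period: "2*pi / ln (real n) > 0"
    using \<open>n \<ge> 2\<close> by simp
  have zeros: "kernel_series g (1 + \<i> * of_real t) = 0"
    if "t \<in> {t \<in> {0<..<2*pi / ln (real n)}. phi_n n t \<in> A}" for t
    using orthogonal[OF that] by (simp add: kernel_series_eq_H2_inner[OF g])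
  have "kernel_series g (of_nat (Suc M)) = 0" for M
  proof (rule kernel_series_eq_0_if_zeros_dense[OF g period _ zeros])
    show "\<exists>t\<in>{t \<in> {0<..<2*pi / ln (real n)}. phi_n n t \<in> A}. c < t \<and> t < d"
      if "0 \<le> c" "c < d" "d \<le> 2*pi / ln (real n)" for c d
      using \<open>n \<ge> 2\<close> \<open>circle_measurable A\<close> \<open>circle_m A = 1\<close> that by (rule phi_n_preimage_meets_interval)
    show "1/2 < Re (of_nat (Suc M) :: complex)"
      unfolding complex_Re_of_nat by linarith
  qed
  then show "g = (\<lambda>k. 0)"
    by (rule H2_eq_0_if_kernel_series_vanishes_at_nat[OF g])
qed

end
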